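(* Let $\eta>0$, let $X^\eta$ be the unique minimizer of $g_\eta$ over $\mathbb{R}^{n\times n}_+$, let $X_f$ be any minimizer of $f$ over $\mathbb{R}^{n\times n}_+$, and let $(\mathbf u^*,\mathbf v^* )$ be the $(\mathbf u,\mathbf v)$-part of an optimal solution of the dual problem $\max_{(\mathbf u,\mathbf v,\mathbf t)\in\mathcal X}\{-\frac{1}{4\eta}\sum_{ij}t_{ij}^2-\tau\langle e^{-\mathbf u/\tau},\mathbf a\rangle-\tau\langle e^{-\mathbf v/\tau},\mathbf b\rangle+\mathbf a^\top\mathbf 1_n+\mathbf b^\top\mathbf 1_n\}$ with $\mathcal X=\{(\mathbf u,\mathbf v,\mathbf t):t_{ij}\ge0,\ t_{ij}\ge u_i+v_j-C_{ij}\}$. Let $D=\|C\|_\infty+\eta(\alpha+\beta)+\tau\log\big(\frac{\alpha+\beta}{2}\big)-\tau\min\{\log a_{min},\log b_{min}\}$. Then: (i) $\|X^\eta\|_1\le\frac{\alpha+\beta}{2}$ and $\|X_f\|_1\le\frac{\alpha+\beta}{2}$; (ii) $u^*_i\ge\tau\log\big(\frac{2a_i}{\alpha+\beta}\big)$ and $v^*_j\ge\tau\log\big(\frac{2b_j}{\alpha+\beta}\big)$ for all $i,j\in[n]$; (iii) $\|\mathbf u^*\|_\infty\le D$ and $\|\mathbf v^*\|_\infty\le D$; (iv) $\min_{i,j}\big\{\sum_{k}X^\eta_{ik},\sum_k X^\eta_{kj}\big\}\ge\min\{a_{min},b_{min}\}e^{-D/\tau}$.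
   Context: Let $n\ge1$, $C\in\mathbb{R}^{n\times n}$ with nonnegative entries and $\|C\|_\infty=\max_{i,j}|C_{ij}|$; $\mathbf a,\mathbf b\in\mathbb{R}^n$ with strictly positive entries, $\alpha=\sum_i a_i$, $\beta=\sum_i b_i$, $a_{min}=\min_i a_i$, $b_{min}=\min_i b_i$; $\tau>0$. For $\mathbf x\in\mathbb{R}^n_+$ and $\mathbf y$ with positive entries, $\mathbf{KL}(\mathbf x\|\mathbf y)=\sum_i x_i\log(x_i/y_i)-x_i+y_i$ (with $0\log0=0$). $\|X\|_1=\sum_{ij}|X_{ij}|$, $\|X\|_2$ is the Frobenius norm, $\mathbf 1_n$ the all-ones vector, $e^{-\mathbf u/\tau}$ the entrywise exponential. $f(X)=\langle C,X\rangle+\tau\mathbf{KL}(X\mathbf 1_n\|\mathbf a)+\tau\mathbf{KL}(X^\top\mathbf 1_n\|\mathbf b)$ for $X\in\mathbb{R}^{n\times n}_+$, and $g_\eta(X)=f(X)+\eta\|X\|_2^2$. *)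

theory Defs
  imports Complex_Main
begin

text \<open>Index set [n] is rendered as a finite type 'n (so n = CARD('n) \<ge> 1).
  Vectors are 'n \<Rightarrow> real, matrices are 'n \<Rightarrow> 'n \<Rightarrow> real.\<close>

definition KL :: "('n::finite \<Rightarrow> real) \<Rightarrow> ('n \<Rightarrow> real) \<Rightarrow> real" where
  "KL x y = (\<Sum>i\<in>UNIV. (if x i = 0 then 0 else x i * ln (x i / y i)) - x i + y i)"

definition rowsum :: "('n::finite \<Rightarrow> 'n \<Rightarrow> real) \<Rightarrow> 'n \<Rightarrow> real" where
  "rowsum X i = (\<Sum>k\<in>UNIV. X i k)"

definition colsum :: "('n::finite \<Rightarrow> 'n \<Rightarrow> real) \<Rightarrow> 'n \<Rightarrow> real" where
  "colsum X j = (\<Sum>k\<in>UNIV. X k j)"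

definition nonneg_mat :: "('n::finite \<Rightarrow> 'n \<Rightarrow> real) \<Rightarrow> bool" where
  "nonneg_mat X \<longleftrightarrow> (\<forall>i j. X i j \<ge> 0)"

definition frob_inner :: "('n::finite \<Rightarrow> 'n \<Rightarrow> real) \<Rightarrow> ('n \<Rightarrow> 'n \<Rightarrow> real) \<Rightarrow> real" where
  "frob_inner A B = (\<Sum>i\<in>UNIV. \<Sum>j\<in>UNIV. A i j * B i j)"

definition norm1_mat :: "('n::finite \<Rightarrow> 'n \<Rightarrow> real) \<Rightarrow> real" where
  "norm1_mat X = (\<Sum>i\<in>UNIV. \<Sum>j\<in>UNIV. \<bar>X i j\<bar>)"

definition frob_sq :: "('n::finite \<Rightarrow> 'n \<Rightarrow> real) \<Rightarrow> real" where
  "frob_sq X = (\<Sum>i\<in>UNIV. \<Sum>j\<in>UNIV. (X i j)\<^sup>2)"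

definition maxnorm_mat :: "('n::finite \<Rightarrow> 'n \<Rightarrow> real) \<Rightarrow> real" where
  "maxnorm_mat C = Max {\<bar>C i j\<bar> | i j. True}"

definition maxnorm_vec :: "('n::finite \<Rightarrow> real) \<Rightarrow> real" where
  "maxnorm_vec u = Max {\<bar>u i\<bar> | i. True}"

definition uot_f :: "('n::finite \<Rightarrow> 'n \<Rightarrow> real) \<Rightarrow> ('n \<Rightarrow> real) \<Rightarrow> ('n \<Rightarrow> real) \<Rightarrow> real
    \<Rightarrow> ('n \<Rightarrow> 'n \<Rightarrow> real) \<Rightarrow> real" where
  "uot_f C a b \<tau> X = frob_inner C X + \<tau> * KL (rowsum X) a + \<tau> * KL (colsum X) b"

definition uot_g :: "('n::finite \<Rightarrow> 'n \<Rightarrow> real) \<Rightarrow> ('n \<Rightarrow> real) \<Rightarrow> ('n \<Rightarrow> real) \<Rightarrow> real \<Rightarrow> real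
    \<Rightarrow> ('n \<Rightarrow> 'n \<Rightarrow> real) \<Rightarrow> real" where
  "uot_g C a b \<tau> \<eta> X = uot_f C a b \<tau> X + \<eta> * frob_sq X"

definition dual_feasible :: "('n::finite \<Rightarrow> 'n \<Rightarrow> real) \<Rightarrow> ('n \<Rightarrow> real) \<Rightarrow> ('n \<Rightarrow> real)
    \<Rightarrow> ('n \<Rightarrow> 'n \<Rightarrow> real) \<Rightarrow> bool" where
  "dual_feasible C u v t \<longleftrightarrow> (\<forall>i j. t i j \<ge> 0 \<and> t i j \<ge> u i + v j - C i j)"

definition dual_obj :: "('n::finite \<Rightarrow> real) \<Rightarrow> ('n \<Rightarrow> real) \<Rightarrow> real \<Rightarrow> real
    \<Rightarrow> ('n \<Rightarrow> real) \<Rightarrow> ('n \<Rightarrow> real) \<Rightarrow> ('n \<Rightarrow> 'n \<Rightarrow> real) \<Rightarrow> real" where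
  "dual_obj a b \<tau> \<eta> u v t =
     - (1 / (4 * \<eta>)) * (\<Sum>i\<in>UNIV. \<Sum>j\<in>UNIV. (t i j)\<^sup>2)
     - \<tau> * (\<Sum>i\<in>UNIV. exp (- u i / \<tau>) * a i)
     - \<tau> * (\<Sum>j\<in>UNIV. exp (- v j / \<tau>) * b j)
     + (\<Sum>i\<in>UNIV. a i) + (\<Sum>j\<in>UNIV. b j)"

end

theory Submission
  imports Defs
begin

text \<open>All four claims are read off first-order optimality conditions.
  Along the ray \<open>s \<mapsto> s X\<close> through a primal minimiser the objective is stationary at
  \<open>s = 1\<close>; this says that the relative entropies of the marginals of X with respect to
  a and b have nonpositive sum, and the log-sum inequality turns that into
  \<open>m\<^sup>2 \<le> \<alpha> \<beta> \<le> ((\<alpha> + \<beta>)/2)\<^sup>2\<close> for the mass m of X.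
  In the dual, stationarity in \<open>u i\<close> and \<open>v j\<close> identifies \<open>a i * exp (- u i / \<tau>)\<close> and
  \<open>b j * exp (- v j / \<tau>)\<close> with the row and column sums of \<open>t / (2 \<eta>)\<close>, and complementary
  slackness \<open>t i j = max 0 (u i + v j - C i j)\<close> gives the same entropy inequality for these
  marginals; the resulting mass bound for \<open>t / (2 \<eta>)\<close> yields (ii) and (iii).
  For (iv), raising one entry \<open>X i j\<close> of the minimiser of \<open>g\<^sub>\<eta>\<close> must not decrease \<open>g\<^sub>\<eta>\<close>,
  which in the limit gives \<open>r i * c j \<ge> a i * b j * exp (- (C i j + 2 \<eta> X i j) / \<tau>)\<close>
  for the marginals r, c.\<close>

section \<open>Relative entropy\<close>

definition rel_entr :: "real \<Rightarrow> real \<Rightarrow> real" where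
  "rel_entr x y = (if x = 0 then 0 else x * ln (x / y))"

lemma KL_eq_sum_rel_entr: "KL x y = (\<Sum>i\<in>UNIV. rel_entr (x i) (y i) - x i + y i)"
  by (simp add: KL_def rel_entr_def)

lemma rel_entr_ge_tangent:
  assumes "x \<ge> 0" "y > 0" "k > 0"
  shows "x * ln k + x - y * k \<le> rel_entr x y"
proof (cases "x = 0")
  case True
  then show ?thesis using assms by (simp add: rel_entr_def)
next
  case False
  then have x: "x > 0" using assms by simp
  have "ln (y * k / x) \<le> y * k / x - 1"
    using x assms by (intro ln_le_minus_one) simp
  moreover have "ln (y * k / x) = ln k - ln (x / y)"
    using x assms by (simp add: ln_div ln_mult)
  ultimately have "x * (ln k + 1 - y * k / x) \<le> x * ln (x / y)"
    using x by (intro mult_left_mono) auto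
  moreover have "x * (ln k + 1 - y * k / x) = x * ln k + x - y * k"
    using x by (simp add: field_simps)
  ultimately show ?thesis using False by (simp add: rel_entr_def)
qed

lemma log_sum_inequality:
  fixes r a :: "'n::finite \<Rightarrow> real"
  assumes "\<And>i. r i \<ge> 0" "\<And>i. a i > 0" "(\<Sum>i\<in>UNIV. r i) = m" "m > 0"
  shows "m * ln (m / (\<Sum>i\<in>UNIV. a i)) \<le> (\<Sum>i\<in>UNIV. rel_entr (r i) (a i))"
proof -
  define A where "A = (\<Sum>i\<in>UNIV. a i)"
  have "A > 0" unfolding A_def using assms(2) by (simp add: sum_pos)
  then have k: "m / A > 0" using assms(4) by simp
  have "(\<Sum>i\<in>UNIV. r i * ln (m / A) + r i - a i * (m / A)) \<le> (\<Sum>i\<in>UNIV. rel_entr (r i) (a i))"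
    by (intro sum_mono rel_entr_ge_tangent assms k)
  moreover have "(\<Sum>i\<in>UNIV. a i * (m / A)) = A * (m / A)"
    unfolding A_def by (rule sum_distrib_right[symmetric])
  moreover have "(\<Sum>i\<in>UNIV. r i * ln (m / A) + r i - a i * (m / A))
      = m * ln (m / A) + m - (\<Sum>i\<in>UNIV. a i * (m / A))"
    using assms(3) by (simp only: sum.distrib sum_subtractf sum_distrib_right[symmetric])
  moreover have "A * (m / A) = m" using \<open>A > 0\<close> by simp
  ultimately show ?thesis by (simp add: A_def)
qed

lemma rel_entr_scale:
  assumes "s > 0" "x \<ge> 0" "y > 0"
  shows "rel_entr (s * x) y = s * rel_entr x y + s * ln s * x"
proof (cases "x = 0")
  case False
  then have "ln (s * x / y) = ln s + ln (x / y)" using assms by (simp add: ln_div ln_mult)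
  then show ?thesis using False assms by (simp add: rel_entr_def algebra_simps)
qed (simp add: rel_entr_def)

lemma rel_entr_increment_le:
  assumes "x \<ge> 0" "y > 0" "e > 0"
  shows "rel_entr (x + e) y - rel_entr x y - e \<le> e * ln ((x + e) / y)"
proof (cases "x = 0")
  case False
  then have x: "x > 0" using assms by simp
  have "ln ((x + e) / x) \<le> (x + e) / x - 1"
    using x assms by (intro ln_le_minus_one) simp
  then have "x * ln ((x + e) / x) \<le> e"
    using x by (simp add: field_simps mult_left_mono)
  moreover have "ln ((x + e) / y) = ln (x / y) + ln ((x + e) / x)"
    using x assms by (simp add: ln_div)
  then have "x * ln ((x + e) / y) = x * ln (x / y) + x * ln ((x + e) / x)"
    by (simp add: distrib_left)
  moreover have "rel_entr (x + e) y = x * ln ((x + e) / y) + e * ln ((x + e) / y)"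
    using x assms by (simp add: rel_entr_def distrib_right)
  moreover have "rel_entr x y = x * ln (x / y)" using False by (simp add: rel_entr_def)
  ultimately show ?thesis by linarith
qed (use assms in \<open>simp add: rel_entr_def\<close>)

lemma KL_scale:
  fixes x y :: "'n::finite \<Rightarrow> real"
  assumes "s > 0" "\<And>i. x i \<ge> 0" "\<And>i. y i > 0"
  shows "KL (\<lambda>i. s * x i) y = s * KL x y + s * ln s * (\<Sum>i\<in>UNIV. x i) + (1 - s) * (\<Sum>i\<in>UNIV. y i)"
proof -
  have "KL (\<lambda>i. s * x i) y
      = (\<Sum>i\<in>UNIV. s * (rel_entr (x i) (y i) - x i + y i) + s * ln s * x i + (1 - s) * y i)"
    unfolding KL_eq_sum_rel_entr using assms
    by (intro sum.cong) (simp_all add: rel_entr_scale algebra_simps)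
  also have "\<dots> = s * KL x y + s * ln s * (\<Sum>i\<in>UNIV. x i) + (1 - s) * (\<Sum>i\<in>UNIV. y i)"
    by (simp only: KL_eq_sum_rel_entr sum_distrib_left flip: sum.distrib)
  finally show ?thesis .
qed

lemma KL_add_at:
  fixes x y :: "'n::finite \<Rightarrow> real"
  shows "KL (\<lambda>k. x k + (if k = i then e else 0)) y
    = KL x y + (rel_entr (x i + e) (y i) - rel_entr (x i) (y i) - e)"
proof -
  have "KL (\<lambda>k. x k + (if k = i then e else 0)) y - KL x y
      = (\<Sum>k\<in>UNIV. if k = i then rel_entr (x i + e) (y i) - rel_entr (x i) (y i) - e else 0)"
    unfolding KL_eq_sum_rel_entr sum_subtractf[symmetric] by (intro sum.cong) auto
  then show ?thesis by simp
qed

lemma mass_sq_le_of_rel_entr_nonpos: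
  fixes r c a b :: "'n::finite \<Rightarrow> real"
  assumes "\<And>i. r i \<ge> 0" "\<And>j. c j \<ge> 0" "\<And>i. a i > 0" "\<And>j. b j > 0"
    and "(\<Sum>i\<in>UNIV. r i) = m" "(\<Sum>j\<in>UNIV. c j) = m"
    and "(\<Sum>i\<in>UNIV. rel_entr (r i) (a i)) + (\<Sum>j\<in>UNIV. rel_entr (c j) (b j)) \<le> 0"
  shows "m\<^sup>2 \<le> (\<Sum>i\<in>UNIV. a i) * (\<Sum>j\<in>UNIV. b j)"
proof -
  define \<alpha> where "\<alpha> = (\<Sum>i\<in>UNIV. a i)"
  define \<beta> where "\<beta> = (\<Sum>j\<in>UNIV. b j)"
  have \<alpha>: "\<alpha> > 0" and \<beta>: "\<beta> > 0"
    unfolding \<alpha>_def \<beta>_def using assms(3,4) by (simp_all add: sum_pos)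
  have "m \<ge> 0" using assms(5) by (metis assms(1) sum_nonneg)
  show ?thesis
  proof (cases "m = 0")
    case True
    then show ?thesis using \<alpha> \<beta> by (simp add: \<alpha>_def \<beta>_def)
  next
    case False
    with \<open>m \<ge> 0\<close> have m: "m > 0" by simp
    have "m * ln (m / \<alpha>) + m * ln (m / \<beta>) \<le> 0"
      using log_sum_inequality[of r a m, OF assms(1,3,5) m]
        log_sum_inequality[of c b m, OF assms(2,4,6) m] assms(7)
      unfolding \<alpha>_def \<beta>_def by linarith
    moreover have "ln (m\<^sup>2 / (\<alpha> * \<beta>)) = ln (m / \<alpha>) + ln (m / \<beta>)"
      using m \<alpha> \<beta> by (simp add: ln_div ln_mult power2_eq_square)
    ultimately have "m * ln (m\<^sup>2 / (\<alpha> * \<beta>)) \<le> 0"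
      by (simp add: distrib_left)
    then have "ln (m\<^sup>2 / (\<alpha> * \<beta>)) \<le> 0"
      using m by (simp add: mult_le_0_iff)
    then have "m\<^sup>2 / (\<alpha> * \<beta>) \<le> 1"
      using m \<alpha> \<beta> by (simp add: ln_le_zero_iff)
    then show ?thesis
      using \<alpha> \<beta> by (simp add: \<alpha>_def \<beta>_def divide_le_eq)
  qed
qed

lemma le_arith_mean_if_sq_le_mult:
  fixes m \<alpha> \<beta> :: real
  assumes "\<alpha> \<ge> 0" "\<beta> \<ge> 0" "m\<^sup>2 \<le> \<alpha> * \<beta>"
  shows "m \<le> (\<alpha> + \<beta>) / 2"
proof (rule power2_le_imp_le)
  have "((\<alpha> + \<beta>) / 2)\<^sup>2 = \<alpha> * \<beta> + ((\<alpha> - \<beta>) / 2)\<^sup>2"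
    by (simp add: power2_eq_square algebra_simps add_divide_distrib diff_divide_distrib)
  then show "m\<^sup>2 \<le> ((\<alpha> + \<beta>) / 2)\<^sup>2"
    using assms(3) zero_le_power2[of "(\<alpha> - \<beta>) / 2"] by linarith
  show "0 \<le> (\<alpha> + \<beta>) / 2" using assms(1,2) by simp
qed

lemma rowsum_nonneg: "nonneg_mat X \<Longrightarrow> 0 \<le> rowsum X i"
  by (simp add: rowsum_def nonneg_mat_def sum_nonneg)

lemma colsum_nonneg: "nonneg_mat X \<Longrightarrow> 0 \<le> colsum X j"
  by (simp add: colsum_def nonneg_mat_def sum_nonneg)

lemma colsum_eq_rowsum_transpose: "colsum X = rowsum (\<lambda>i j. X j i)"
  by (simp add: fun_eq_iff rowsum_def colsum_def)

lemma norm1_mat_eq_sum_rowsum: "nonneg_mat X \<Longrightarrow> norm1_mat X = (\<Sum>i\<in>UNIV. rowsum X i)"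
  by (simp add: norm1_mat_def rowsum_def nonneg_mat_def)

lemma norm1_mat_eq_sum_colsum: "nonneg_mat X \<Longrightarrow> norm1_mat X = (\<Sum>j\<in>UNIV. colsum X j)"
  unfolding norm1_mat_def colsum_def nonneg_mat_def by (subst sum.swap) simp

lemma rowsum_le_norm1_mat: "nonneg_mat X \<Longrightarrow> rowsum X i \<le> norm1_mat X"
  by (simp add: norm1_mat_eq_sum_rowsum member_le_sum rowsum_nonneg)

lemma colsum_le_norm1_mat: "nonneg_mat X \<Longrightarrow> colsum X j \<le> norm1_mat X"
  by (simp add: norm1_mat_eq_sum_colsum member_le_sum colsum_nonneg)

lemma entry_le_rowsum: "nonneg_mat X \<Longrightarrow> X i j \<le> rowsum X i"
  unfolding rowsum_def nonneg_mat_def by (rule member_le_sum) auto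

lemma sum_sum_delta:
  fixes f :: "'n::finite \<Rightarrow> 'm::finite \<Rightarrow> real"
  shows "(\<Sum>k\<in>UNIV. \<Sum>l\<in>UNIV. if k = i \<and> l = j then f k l else 0) = f i j"
proof -
  have "(\<Sum>l\<in>UNIV. if k = i \<and> l = j then f k l else 0) = (if k = i then f k j else 0)" for k
    by (auto simp: sum.delta)
  then show ?thesis by (simp add: sum.delta)
qed

lemma abs_le_maxnorm_mat: "\<bar>C i j\<bar> \<le> maxnorm_mat (C :: 'n::finite \<Rightarrow> 'n \<Rightarrow> real)"
proof -
  have "{\<bar>C i j\<bar> | i j. True} = (\<lambda>(i, j). \<bar>C i j\<bar>) ` UNIV" by auto
  then show ?thesis unfolding maxnorm_mat_def by (metis (mono_tags) Max_ge UNIV_I finite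
      finite_imageI image_eqI old.prod.case)
qed

lemma le_maxnorm_mat: "C i j \<le> maxnorm_mat C"
  using abs_le_maxnorm_mat by (rule order_trans[OF abs_ge_self])

lemma maxnorm_mat_nonneg: "0 \<le> maxnorm_mat C"
  using abs_le_maxnorm_mat by (rule order_trans[OF abs_ge_zero])

lemma maxnorm_vec_le: "(\<And>i. \<bar>u i\<bar> \<le> B) \<Longrightarrow> maxnorm_vec (u :: 'n::finite \<Rightarrow> real) \<le> B"
proof -
  assume "\<And>i. \<bar>u i\<bar> \<le> B"
  moreover have "{\<bar>u i\<bar> | i. True} = range (\<lambda>i. \<bar>u i\<bar>)" by auto
  ultimately show ?thesis unfolding maxnorm_vec_def by (subst Max_le_iff) auto
qed

section \<open>The regularised primal problem\<close>

definition uot_g_minimizer ::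
    "('n::finite \<Rightarrow> 'n \<Rightarrow> real) \<Rightarrow> ('n \<Rightarrow> real) \<Rightarrow> ('n \<Rightarrow> real) \<Rightarrow> real \<Rightarrow> real
      \<Rightarrow> ('n \<Rightarrow> 'n \<Rightarrow> real) \<Rightarrow> bool" where
  "uot_g_minimizer C a b \<tau> \<eta> X \<longleftrightarrow>
     nonneg_mat X \<and> (\<forall>Y. nonneg_mat Y \<longrightarrow> uot_g C a b \<tau> \<eta> X \<le> uot_g C a b \<tau> \<eta> Y)"

lemma uot_g_scale:
  fixes C X :: "'n::finite \<Rightarrow> 'n \<Rightarrow> real"
  assumes "s > 0" "nonneg_mat X" "\<And>i. a i > 0" "\<And>j. b j > 0"
  shows "uot_g C a b \<tau> \<eta> (\<lambda>i j. s * X i j) = s * frob_inner C X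
    + \<tau> * (s * KL (rowsum X) a + s * ln s * norm1_mat X + (1 - s) * (\<Sum>i\<in>UNIV. a i))
    + \<tau> * (s * KL (colsum X) b + s * ln s * norm1_mat X + (1 - s) * (\<Sum>j\<in>UNIV. b j))
    + \<eta> * (s\<^sup>2 * frob_sq X)"
proof -
  have "rowsum (\<lambda>i j. s * X i j) = (\<lambda>i. s * rowsum X i)"
    "colsum (\<lambda>i j. s * X i j) = (\<lambda>j. s * colsum X j)"
    by (simp_all add: fun_eq_iff rowsum_def colsum_def sum_distrib_left)
  moreover have "frob_inner C (\<lambda>i j. s * X i j) = s * frob_inner C X"
    by (simp add: frob_inner_def sum_distrib_left algebra_simps)
  moreover have "frob_sq (\<lambda>i j. s * X i j) = s\<^sup>2 * frob_sq X"
    by (simp add: frob_sq_def sum_distrib_left power_mult_distrib)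
  ultimately show ?thesis
    using assms
    by (simp add: uot_g_def uot_f_def KL_scale rowsum_nonneg colsum_nonneg
        flip: norm1_mat_eq_sum_rowsum norm1_mat_eq_sum_colsum)
qed

lemma uot_g_minimizer_stationary_scaling:
  assumes min: "uot_g_minimizer C a b \<tau> \<eta> X" and a: "\<And>i. a i > 0" and b: "\<And>j. b j > 0"
  shows "frob_inner C X + \<tau> * ((\<Sum>i\<in>UNIV. rel_entr (rowsum X i) (a i))
      + (\<Sum>j\<in>UNIV. rel_entr (colsum X j) (b j))) + 2 * \<eta> * frob_sq X = 0"
proof -
  have X: "nonneg_mat X" using min by (simp add: uot_g_minimizer_def)
  define m where "m = norm1_mat X"
  define \<phi> where "\<phi> s = s * frob_inner C X
    + \<tau> * (s * KL (rowsum X) a + s * ln s * m + (1 - s) * (\<Sum>i\<in>UNIV. a i))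
    + \<tau> * (s * KL (colsum X) b + s * ln s * m + (1 - s) * (\<Sum>j\<in>UNIV. b j))
    + \<eta> * (s\<^sup>2 * frob_sq X)" for s
  have \<phi>: "\<phi> s = uot_g C a b \<tau> \<eta> (\<lambda>i j. s * X i j)" if "s > 0" for s
    using uot_g_scale[OF that X a b] by (simp add: \<phi>_def m_def)
  have local_min: "\<forall>s. \<bar>1 - s\<bar> < 1 \<longrightarrow> \<phi> 1 \<le> \<phi> s"
  proof (intro allI impI)
    fix s :: real
    assume "\<bar>1 - s\<bar> < 1"
    then have "s > 0" by simp
    moreover have "nonneg_mat (\<lambda>i j. s * X i j)"
      using X \<open>s > 0\<close> by (simp add: nonneg_mat_def)
    ultimately show "\<phi> 1 \<le> \<phi> s"
      using min \<phi>[of 1] \<phi>[of s] by (simp add: uot_g_minimizer_def)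
  qed
  have deriv: "(\<phi> has_real_derivative frob_inner C X + \<tau> * (KL (rowsum X) a + m - (\<Sum>i\<in>UNIV. a i))
      + \<tau> * (KL (colsum X) b + m - (\<Sum>j\<in>UNIV. b j)) + 2 * \<eta> * frob_sq X) (at 1)"
    unfolding \<phi>_def by (rule derivative_eq_intros refl | simp)+
  have stationary: "frob_inner C X + \<tau> * (KL (rowsum X) a + m - (\<Sum>i\<in>UNIV. a i))
      + \<tau> * (KL (colsum X) b + m - (\<Sum>j\<in>UNIV. b j)) + 2 * \<eta> * frob_sq X = 0"
    by (rule DERIV_local_min[OF deriv zero_less_one local_min])
  have "KL (rowsum X) a + m - (\<Sum>i\<in>UNIV. a i) = (\<Sum>i\<in>UNIV. rel_entr (rowsum X i) (a i))"
    and "KL (colsum X) b + m - (\<Sum>j\<in>UNIV. b j) = (\<Sum>j\<in>UNIV. rel_entr (colsum X j) (b j))"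
    using norm1_mat_eq_sum_rowsum[OF X] norm1_mat_eq_sum_colsum[OF X]
    by (simp_all add: KL_eq_sum_rel_entr sum.distrib sum_subtractf m_def)
  with stationary show ?thesis by (simp add: distrib_left)
qed

lemma uot_g_minimizer_norm1_le:
  assumes min: "uot_g_minimizer C a b \<tau> \<eta> X" and C: "\<And>i j. C i j \<ge> 0"
    and a: "\<And>i. a i > 0" and b: "\<And>j. b j > 0" and "\<tau> > 0" "\<eta> \<ge> 0"
  shows "norm1_mat X \<le> ((\<Sum>i\<in>UNIV. a i) + (\<Sum>j\<in>UNIV. b j)) / 2"
proof -
  have X: "nonneg_mat X" using min by (simp add: uot_g_minimizer_def)
  have "0 \<le> frob_inner C X"
    using C X by (simp add: frob_inner_def nonneg_mat_def sum_nonneg)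
  moreover have "0 \<le> 2 * \<eta> * frob_sq X"
    using \<open>\<eta> \<ge> 0\<close> by (simp add: frob_sq_def sum_nonneg)
  ultimately have "\<tau> * ((\<Sum>i\<in>UNIV. rel_entr (rowsum X i) (a i))
      + (\<Sum>j\<in>UNIV. rel_entr (colsum X j) (b j))) \<le> 0"
    using uot_g_minimizer_stationary_scaling[OF min a b] by linarith
  then have "(\<Sum>i\<in>UNIV. rel_entr (rowsum X i) (a i)) + (\<Sum>j\<in>UNIV. rel_entr (colsum X j) (b j)) \<le> 0"
    using \<open>\<tau> > 0\<close> by (simp add: mult_le_0_iff)
  then have "(norm1_mat X)\<^sup>2 \<le> (\<Sum>i\<in>UNIV. a i) * (\<Sum>j\<in>UNIV. b j)"
    using norm1_mat_eq_sum_rowsum[OF X] norm1_mat_eq_sum_colsum[OF X]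
    by (intro mass_sq_le_of_rel_entr_nonpos[of "rowsum X" "colsum X"])
      (auto simp: rowsum_nonneg[OF X] colsum_nonneg[OF X] a b)
  then show ?thesis
    using a b by (intro le_arith_mean_if_sq_le_mult) (auto intro: sum_nonneg less_imp_le)
qed

lemma uot_g_add_at:
  fixes C X :: "'n::finite \<Rightarrow> 'n \<Rightarrow> real"
  shows "uot_g C a b \<tau> \<eta> (\<lambda>k l. X k l + (if k = i \<and> l = j then e else 0))
    = uot_g C a b \<tau> \<eta> X + e * C i j
      + \<tau> * (rel_entr (rowsum X i + e) (a i) - rel_entr (rowsum X i) (a i) - e)
      + \<tau> * (rel_entr (colsum X j + e) (b j) - rel_entr (colsum X j) (b j) - e)
      + \<eta> * (2 * e * X i j + e\<^sup>2)"
proof -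
  let ?Y = "\<lambda>k l. X k l + (if k = i \<and> l = j then e else 0)"
  have "rowsum ?Y = (\<lambda>k. rowsum X k + (if k = i then e else 0))"
    "colsum ?Y = (\<lambda>l. colsum X l + (if l = j then e else 0))"
    by (auto simp: fun_eq_iff rowsum_def colsum_def sum.distrib)
  moreover have "frob_inner C ?Y = frob_inner C X + e * C i j"
  proof -
    have "frob_inner C ?Y
        = (\<Sum>k\<in>UNIV. \<Sum>l\<in>UNIV. C k l * X k l + (if k = i \<and> l = j then e * C k l else 0))"
      unfolding frob_inner_def by (intro sum.cong refl) (simp add: algebra_simps)
    then show ?thesis by (simp only: sum.distrib sum_sum_delta frob_inner_def)
  qed
  moreover have "frob_sq ?Y = frob_sq X + (2 * e * X i j + e\<^sup>2)"
  proof -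
    have "frob_sq ?Y
        = (\<Sum>k\<in>UNIV. \<Sum>l\<in>UNIV. (X k l)\<^sup>2 + (if k = i \<and> l = j then 2 * e * X k l + e\<^sup>2 else 0))"
      unfolding frob_sq_def by (intro sum.cong refl) (simp add: power2_eq_square algebra_simps)
    then show ?thesis by (simp only: sum.distrib sum_sum_delta frob_sq_def)
  qed
  ultimately show ?thesis
    by (simp add: uot_g_def uot_f_def KL_add_at algebra_simps)
qed

lemma uot_g_minimizer_marginal_product:
  assumes min: "uot_g_minimizer C a b \<tau> \<eta> X"
    and a: "\<And>i. a i > 0" and b: "\<And>j. b j > 0" and \<tau>: "\<tau> > 0"
  shows "a i * b j * exp (- (C i j + 2 * \<eta> * X i j) / \<tau>) \<le> rowsum X i * colsum X j"
proof -
  have X: "nonneg_mat X" using min by (simp add: uot_g_minimizer_def)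
  define r where "r = rowsum X i"
  define c where "c = colsum X j"
  have r: "r \<ge> 0" and c: "c \<ge> 0"
    using rowsum_nonneg[OF X] colsum_nonneg[OF X] by (simp_all add: r_def c_def)
  \<comment> \<open>Exponentiated, the optimality condition for raising \<open>X i j\<close> by e stays continuous
    at \<open>e = 0\<close> even when a marginal vanishes.\<close>
  have bound: "a i * b j * exp (- (C i j + \<eta> * (2 * X i j + e)) / \<tau>) \<le> (r + e) * (c + e)"
    if e: "e > 0" for e
  proof -
    let ?Y = "\<lambda>k l. X k l + (if k = i \<and> l = j then e else 0)"
    have "nonneg_mat ?Y" using X e by (simp add: nonneg_mat_def)
    then have "uot_g C a b \<tau> \<eta> X \<le> uot_g C a b \<tau> \<eta> ?Y"
      using min by (simp add: uot_g_minimizer_def)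
    then have "0 \<le> e * C i j + \<tau> * (rel_entr (r + e) (a i) - rel_entr r (a i) - e)
        + \<tau> * (rel_entr (c + e) (b j) - rel_entr c (b j) - e) + \<eta> * (2 * e * X i j + e\<^sup>2)"
      unfolding uot_g_add_at r_def c_def by linarith
    also have "\<dots> \<le> e * C i j + \<tau> * (e * ln ((r + e) / a i)) + \<tau> * (e * ln ((c + e) / b j))
        + \<eta> * (2 * e * X i j + e\<^sup>2)"
      using rel_entr_increment_le[OF r a e] rel_entr_increment_le[OF c b e] \<tau>
      by (simp add: add_mono)
    also have "\<dots> = e * (C i j + \<eta> * (2 * X i j + e) + \<tau> * ln ((r + e) * (c + e) / (a i * b j)))"
    proof -
      have "r + e > 0" "c + e > 0" using r c e by simp_all
      then have "ln ((r + e) * (c + e) / (a i * b j)) = ln ((r + e) / a i) + ln ((c + e) / b j)"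
        using a[of i] b[of j] by (simp add: ln_mult ln_div)
      then show ?thesis by (simp add: power2_eq_square algebra_simps)
    qed
    finally have "0 \<le> C i j + \<eta> * (2 * X i j + e) + \<tau> * ln ((r + e) * (c + e) / (a i * b j))"
      using e by (simp add: zero_le_mult_iff)
    then have "- (C i j + \<eta> * (2 * X i j + e)) / \<tau> \<le> ln ((r + e) * (c + e) / (a i * b j))"
      using \<tau> by (simp add: divide_le_eq mult.commute)
    then have "exp (- (C i j + \<eta> * (2 * X i j + e)) / \<tau>) \<le> (r + e) * (c + e) / (a i * b j)"
      using r c e a[of i] b[of j] by (simp add: ln_ge_iff)
    then show ?thesis
      using a[of i] b[of j] by (simp add: le_divide_eq mult.commute)
  qed
  have lim_exp: "((\<lambda>e. a i * b j * exp (- (C i j + \<eta> * (2 * X i j + e)) / \<tau>))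
      \<longlongrightarrow> a i * b j * exp (- (C i j + \<eta> * (2 * X i j + 0)) / \<tau>)) (at_right 0)"
    using \<tau> by (intro tendsto_intros) simp
  have lim_prod: "((\<lambda>e. (r + e) * (c + e)) \<longlongrightarrow> (r + 0) * (c + 0)) (at_right 0)"
    by (intro tendsto_intros)
  have ev: "\<forall>\<^sub>F e in at_right 0. a i * b j * exp (- (C i j + \<eta> * (2 * X i j + e)) / \<tau>)
      \<le> (r + e) * (c + e)"
    using eventually_at_right_less[of "0::real"] by (rule eventually_mono) (use bound in auto)
  from tendsto_le[OF trivial_limit_at_right_real lim_prod lim_exp ev] show ?thesis
    by (simp add: r_def c_def ac_simps)
qed

lemma uot_g_minimizer_marginals_ge:
  assumes min: "uot_g_minimizer C a b \<tau> \<eta> X"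
    and a: "\<And>i. a i > 0" and b: "\<And>j. b j > 0" and \<tau>: "\<tau> > 0" and \<eta>: "\<eta> \<ge> 0"
    and C: "\<And>i j. C i j \<le> Cm" and amin: "\<And>i. amin \<le> a i" and bmin: "\<And>j. bmin \<le> b j"
    and "0 < amin" "0 < bmin" and M: "norm1_mat X \<le> M"
  shows "amin * bmin / M * exp (- (Cm + 2 * \<eta> * M) / \<tau>) \<le> rowsum X i"
    and "amin * bmin / M * exp (- (Cm + 2 * \<eta> * M) / \<tau>) \<le> colsum X j"
proof -
  have X: "nonneg_mat X" using min by (simp add: uot_g_minimizer_def)
  have factor_ge: "amin * bmin / M * exp (- (Cm + 2 * \<eta> * M) / \<tau>) \<le> p"
    if prod: "a k * b k * exp (- (C k k + 2 * \<eta> * X k k) / \<tau>) \<le> p * q"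
      and "0 \<le> p" "q \<le> M" for p q k
  proof -
    have "X k k \<le> M"
      using entry_le_rowsum[OF X] rowsum_le_norm1_mat[OF X] M by (meson order_trans)
    then have "\<eta> * X k k \<le> \<eta> * M" using \<eta> by (rule mult_left_mono)
    then have "- (Cm + 2 * \<eta> * M) / \<tau> \<le> - (C k k + 2 * \<eta> * X k k) / \<tau>"
      using C[of k k] \<tau> by (intro divide_right_mono) auto
    then have "amin * bmin * exp (- (Cm + 2 * \<eta> * M) / \<tau>)
        \<le> a k * b k * exp (- (C k k + 2 * \<eta> * X k k) / \<tau>)"
      using amin[of k] bmin[of k] \<open>0 < amin\<close> \<open>0 < bmin\<close>
      by (intro mult_mono) (auto intro: mult_mono)
    also have "\<dots> \<le> p * q" by (rule prod)
    also have "\<dots> \<le> p * M" using \<open>0 \<le> p\<close> \<open>q \<le> M\<close> by (simp add: mult_left_mono)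
    finally have le: "amin * bmin * exp (- (Cm + 2 * \<eta> * M) / \<tau>) \<le> p * M" .
    moreover have "0 < amin * bmin * exp (- (Cm + 2 * \<eta> * M) / \<tau>)"
      using \<open>0 < amin\<close> \<open>0 < bmin\<close> by simp
    ultimately have "M > 0"
      using \<open>0 \<le> p\<close> by (smt (verit) mult_nonneg_nonpos)
    with le show ?thesis by (simp add: divide_le_eq mult.commute)
  qed
  show "amin * bmin / M * exp (- (Cm + 2 * \<eta> * M) / \<tau>) \<le> rowsum X i"
    using uot_g_minimizer_marginal_product[OF min a b \<tau>, of i i]
    by (rule factor_ge[OF _ rowsum_nonneg[OF X]])
      (meson colsum_le_norm1_mat[OF X] M order_trans)
  have "a j * b j * exp (- (C j j + 2 * \<eta> * X j j) / \<tau>) \<le> colsum X j * rowsum X j"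
    using uot_g_minimizer_marginal_product[OF min a b \<tau>, of j j] by (simp add: mult.commute)
  then show "amin * bmin / M * exp (- (Cm + 2 * \<eta> * M) / \<tau>) \<le> colsum X j"
    by (rule factor_ge[OF _ colsum_nonneg[OF X]])
      (meson rowsum_le_norm1_mat[OF X] M order_trans)
qed

section \<open>The dual problem\<close>

definition dual_optimal ::
    "('n::finite \<Rightarrow> 'n \<Rightarrow> real) \<Rightarrow> ('n \<Rightarrow> real) \<Rightarrow> ('n \<Rightarrow> real) \<Rightarrow> real \<Rightarrow> real
      \<Rightarrow> ('n \<Rightarrow> real) \<Rightarrow> ('n \<Rightarrow> real) \<Rightarrow> ('n \<Rightarrow> 'n \<Rightarrow> real) \<Rightarrow> bool" where
  "dual_optimal C a b \<tau> \<eta> u v t \<longleftrightarrow> dual_feasible C u v t \<and>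
     (\<forall>u' v' t'. dual_feasible C u' v' t' \<longrightarrow> dual_obj a b \<tau> \<eta> u' v' t' \<le> dual_obj a b \<tau> \<eta> u v t)"

lemma dual_optimal_transpose:
  assumes "dual_optimal C a b \<tau> \<eta> u v t"
  shows "dual_optimal (\<lambda>i j. C j i) b a \<tau> \<eta> v u (\<lambda>i j. t j i)"
proof -
  have feasible: "dual_feasible (\<lambda>i j. C j i) u' v' t' \<longleftrightarrow> dual_feasible C v' u' (\<lambda>i j. t' j i)"
    for u' v' t'
    unfolding dual_feasible_def by (auto simp: add.commute)
  have obj: "dual_obj b a \<tau> \<eta> u' v' t' = dual_obj a b \<tau> \<eta> v' u' (\<lambda>i j. t' j i)" for u' v' t'
    unfolding dual_obj_def by (simp add: sum.swap[of "\<lambda>i j. (t' i j)\<^sup>2"])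
  show ?thesis
    using assms unfolding dual_optimal_def feasible obj by auto
qed

lemma dual_optimal_slack:
  assumes opt: "dual_optimal C a b \<tau> \<eta> u v t" and "\<eta> > 0"
  shows "t i j = max 0 (u i + v j - C i j)"
proof (rule ccontr)
  define w where "w = max 0 (u i + v j - C i j)"
  assume "t i j \<noteq> max 0 (u i + v j - C i j)"
  moreover have "w \<le> t i j" using opt by (simp add: w_def dual_optimal_def dual_feasible_def)
  ultimately have "w < t i j" by (simp add: w_def order_less_le)
  then have "w\<^sup>2 < (t i j)\<^sup>2" by (simp add: w_def power_strict_mono)
  define t' where "t' = (\<lambda>k l. if k = i \<and> l = j then w else t k l)"
  have "dual_feasible C u v t'"
    using opt by (auto simp: dual_optimal_def dual_feasible_def t'_def w_def)
  then have "dual_obj a b \<tau> \<eta> u v t' \<le> dual_obj a b \<tau> \<eta> u v t"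
    using opt by (simp add: dual_optimal_def)
  moreover have "(\<Sum>k\<in>UNIV. \<Sum>l\<in>UNIV. (t' k l)\<^sup>2)
      = (\<Sum>k\<in>UNIV. \<Sum>l\<in>UNIV. (t k l)\<^sup>2) + (w\<^sup>2 - (t i j)\<^sup>2)"
  proof -
    have "(\<Sum>k\<in>UNIV. \<Sum>l\<in>UNIV. (t' k l)\<^sup>2)
        = (\<Sum>k\<in>UNIV. \<Sum>l\<in>UNIV. (t k l)\<^sup>2 + (if k = i \<and> l = j then w\<^sup>2 - (t k l)\<^sup>2 else 0))"
      by (intro sum.cong refl) (auto simp: t'_def)
    then show ?thesis by (simp only: sum.distrib sum_sum_delta)
  qed
  ultimately show False
    using \<open>w\<^sup>2 < (t i j)\<^sup>2\<close> \<open>\<eta> > 0\<close> by (simp add: dual_obj_def field_simps)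
qed

lemma dual_obj_update_row:
  fixes t :: "'n::finite \<Rightarrow> 'n \<Rightarrow> real"
  shows "dual_obj a b \<tau> \<eta> (u(i := w)) v (\<lambda>k l. if k = i then h l else t k l)
    = dual_obj a b \<tau> \<eta> u v t - (\<Sum>l\<in>UNIV. (h l)\<^sup>2 - (t i l)\<^sup>2) / (4 * \<eta>)
      - \<tau> * a i * (exp (- w / \<tau>) - exp (- u i / \<tau>))"
proof -
  have "(\<Sum>k\<in>UNIV. \<Sum>l\<in>UNIV. (if k = i then h l else t k l)\<^sup>2) - (\<Sum>k\<in>UNIV. \<Sum>l\<in>UNIV. (t k l)\<^sup>2)
      = (\<Sum>k\<in>UNIV. if k = i then (\<Sum>l\<in>UNIV. (h l)\<^sup>2 - (t i l)\<^sup>2) else 0)"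
    unfolding sum_subtractf[symmetric] by (intro sum.cong) (auto simp: sum_subtractf)
  moreover have "(\<Sum>k\<in>UNIV. exp (- (u(i := w)) k / \<tau>) * a k) - (\<Sum>k\<in>UNIV. exp (- u k / \<tau>) * a k)
      = (\<Sum>k\<in>UNIV. if k = i then a i * (exp (- w / \<tau>) - exp (- u i / \<tau>)) else 0)"
    unfolding sum_subtractf[symmetric] by (intro sum.cong) (auto simp: algebra_simps)
  ultimately show ?thesis
    by (simp add: dual_obj_def algebra_simps diff_divide_distrib) (simp flip: distrib_left)
qed

lemma dual_optimal_row_stationary:
  fixes t :: "'n::finite \<Rightarrow> 'n \<Rightarrow> real"
  assumes opt: "dual_optimal C a b \<tau> \<eta> u v t" and \<tau>: "\<tau> > 0" and \<eta>: "\<eta> > 0"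
  shows "a i * exp (- u i / \<tau>) = rowsum t i / (2 * \<eta>)"
proof -
  define S where "S = rowsum t i"
  define E where "E = exp (- u i / \<tau>)"
  define N where "N = real (card (UNIV :: 'n set))"
  define Q where "Q d = 2 * d * S + N * d\<^sup>2 + 4 * \<eta> * \<tau> * a i * E * (exp (- d / \<tau>) - 1)"
    for d
  \<comment> \<open>Raising \<open>u i\<close> and row i of t by d (clipped at 0) stays feasible; the resulting decrease
    of the objective is nonnegative by optimality and at most \<open>Q d / (4 \<eta>)\<close>, so Q is minimal at 0.\<close>
  have Q_nonneg: "0 \<le> Q d" for d
  proof -
    define h where "h l = max 0 (t i l + d)" for l
    have "dual_feasible C u v t" using opt by (simp add: dual_optimal_def)
    then have "dual_feasible C (u(i := u i + d)) v (\<lambda>k l. if k = i then h l else t k l)"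
      unfolding dual_feasible_def h_def by (smt (verit) fun_upd_apply)
    then have "dual_obj a b \<tau> \<eta> (u(i := u i + d)) v (\<lambda>k l. if k = i then h l else t k l)
        \<le> dual_obj a b \<tau> \<eta> u v t"
      using opt by (simp add: dual_optimal_def)
    then have "0 \<le> (\<Sum>l\<in>UNIV. (h l)\<^sup>2 - (t i l)\<^sup>2) / (4 * \<eta>)
        + \<tau> * a i * (exp (- (u i + d) / \<tau>) - exp (- u i / \<tau>))"
      unfolding dual_obj_update_row by linarith
    moreover have "(\<Sum>l\<in>UNIV. (h l)\<^sup>2 - (t i l)\<^sup>2) \<le> (\<Sum>l\<in>UNIV. 2 * d * t i l + d\<^sup>2)"
    proof (intro sum_mono)
      fix l
      have "(h l)\<^sup>2 \<le> (t i l + d)\<^sup>2" by (simp add: h_def max_def)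
      then show "(h l)\<^sup>2 - (t i l)\<^sup>2 \<le> 2 * d * t i l + d\<^sup>2"
        by (simp add: power2_sum algebra_simps)
    qed
    moreover have "(\<Sum>l\<in>UNIV. 2 * d * t i l + d\<^sup>2) = 2 * d * S + N * d\<^sup>2"
      by (simp add: sum.distrib S_def rowsum_def sum_distrib_left N_def)
    ultimately have "0 \<le> 2 * d * S + N * d\<^sup>2
        + 4 * \<eta> * (\<tau> * a i * (exp (- (u i + d) / \<tau>) - exp (- u i / \<tau>)))"
      using \<eta> by (simp add: field_simps)
    moreover have "exp (- (u i + d) / \<tau>) = E * exp (- d / \<tau>)"
      by (simp add: E_def diff_divide_distrib add_divide_distrib flip: exp_add)
    ultimately show ?thesis by (simp add: Q_def E_def algebra_simps)
  qed
  have "(Q has_real_derivative 2 * S - 4 * \<eta> * a i * E) (at 0)"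
    unfolding Q_def using \<tau> by (auto intro!: derivative_eq_intros)
  moreover have "\<forall>d. \<bar>0 - d\<bar> < 1 \<longrightarrow> Q 0 \<le> Q d"
    using Q_nonneg by (simp add: Q_def)
  ultimately have "2 * S - 4 * \<eta> * a i * E = 0"
    by (rule DERIV_local_min[OF _ zero_less_one])
  then show ?thesis using \<eta> by (simp add: S_def E_def field_simps)
qed

lemma dual_optimal_col_stationary:
  assumes "dual_optimal C a b \<tau> \<eta> u v t" "\<tau> > 0" "\<eta> > 0"
  shows "b j * exp (- v j / \<tau>) = colsum t j / (2 * \<eta>)"
  using dual_optimal_row_stationary[OF dual_optimal_transpose[OF assms(1)] assms(2,3)]
  by (simp add: colsum_eq_rowsum_transpose)

lemma dual_optimal_nonneg: "dual_optimal C a b \<tau> \<eta> u v t \<Longrightarrow> nonneg_mat t"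
  by (simp add: dual_optimal_def dual_feasible_def nonneg_mat_def)

lemma dual_optimal_norm1_le:
  assumes opt: "dual_optimal C a b \<tau> \<eta> u v t" and C: "\<And>i j. C i j \<ge> 0"
    and a: "\<And>i. a i > 0" and b: "\<And>j. b j > 0" and \<tau>: "\<tau> > 0" and \<eta>: "\<eta> > 0"
  shows "norm1_mat t / (2 * \<eta>) \<le> ((\<Sum>i\<in>UNIV. a i) + (\<Sum>j\<in>UNIV. b j)) / 2"
proof -
  have t: "nonneg_mat t" using opt by (rule dual_optimal_nonneg)
  define r where "r i = a i * exp (- u i / \<tau>)" for i
  define c where "c j = b j * exp (- v j / \<tau>)" for j
  have r_eq: "r i = rowsum t i / (2 * \<eta>)" for i
    using dual_optimal_row_stationary[OF opt \<tau> \<eta>] by (simp add: r_def)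
  have c_eq: "c j = colsum t j / (2 * \<eta>)" for j
    using dual_optimal_col_stationary[OF opt \<tau> \<eta>] by (simp add: c_def)
  have "(\<Sum>i\<in>UNIV. r i * u i) = (\<Sum>i\<in>UNIV. \<Sum>j\<in>UNIV. t i j * u i) / (2 * \<eta>)"
    by (simp add: r_eq rowsum_def sum_divide_distrib sum_distrib_right)
  moreover have "(\<Sum>j\<in>UNIV. c j * v j) = (\<Sum>i\<in>UNIV. \<Sum>j\<in>UNIV. t i j * v j) / (2 * \<eta>)"
    by (simp add: c_eq colsum_def sum_divide_distrib sum_distrib_right) (rule sum.swap)
  moreover have "0 \<le> (\<Sum>i\<in>UNIV. \<Sum>j\<in>UNIV. t i j * (u i + v j))"
  proof (intro sum_nonneg)
    fix i j
    show "0 \<le> t i j * (u i + v j)"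
      using dual_optimal_slack[OF opt \<eta>, of i j] C[of i j] by (auto simp: max_def)
  qed
  ultimately have "0 \<le> (\<Sum>i\<in>UNIV. r i * u i) + (\<Sum>j\<in>UNIV. c j * v j)"
    using \<eta> by (simp add: distrib_left sum.distrib add_divide_distrib[symmetric])
  moreover have "rel_entr (r i) (a i) = - (r i * u i) / \<tau>" for i
    using a[of i] by (simp add: r_def rel_entr_def)
  moreover have "rel_entr (c j) (b j) = - (c j * v j) / \<tau>" for j
    using b[of j] by (simp add: c_def rel_entr_def)
  ultimately have "(\<Sum>i\<in>UNIV. rel_entr (r i) (a i)) + (\<Sum>j\<in>UNIV. rel_entr (c j) (b j)) \<le> 0"
    using \<tau> by (simp add: sum_divide_distrib[symmetric] sum_negf) (simp add: field_simps)
  moreover have "(\<Sum>i\<in>UNIV. r i) = norm1_mat t / (2 * \<eta>)"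
    by (simp add: r_eq norm1_mat_eq_sum_rowsum[OF t] sum_divide_distrib)
  moreover have "(\<Sum>j\<in>UNIV. c j) = norm1_mat t / (2 * \<eta>)"
    by (simp add: c_eq norm1_mat_eq_sum_colsum[OF t] sum_divide_distrib)
  ultimately have "(norm1_mat t / (2 * \<eta>))\<^sup>2 \<le> (\<Sum>i\<in>UNIV. a i) * (\<Sum>j\<in>UNIV. b j)"
    using a b by (intro mass_sq_le_of_rel_entr_nonpos) (auto simp: r_def c_def less_imp_le)
  then show ?thesis
    using a b by (intro le_arith_mean_if_sq_le_mult) (auto intro: sum_nonneg less_imp_le)
qed

lemma dual_optimal_bounds:
  assumes opt: "dual_optimal C a b \<tau> \<eta> u v t" and C: "\<And>i j. C i j \<ge> 0"
    and a: "\<And>i. a i > 0" and b: "\<And>j. b j > 0" and \<tau>: "\<tau> > 0" and \<eta>: "\<eta> > 0"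
  defines "M \<equiv> ((\<Sum>i\<in>UNIV. a i) + (\<Sum>j\<in>UNIV. b j)) / 2"
  shows "\<tau> * ln (a i / M) \<le> u i" and "\<tau> * ln (b j / M) \<le> v j" and "t i j \<le> 2 * \<eta> * M"
proof -
  have t: "nonneg_mat t" using opt by (rule dual_optimal_nonneg)
  have mass: "norm1_mat t / (2 * \<eta>) \<le> M"
    unfolding M_def by (rule dual_optimal_norm1_le[OF opt C a b \<tau> \<eta>])
  have ln_le: "\<tau> * ln (x / M) \<le> w" if x: "0 < x" and le: "x * exp (- w / \<tau>) \<le> M" for x w
  proof -
    have pos: "0 < x * exp (- w / \<tau>)" using x by simp
    then have "0 < M" using le by linarith
    have "ln (x * exp (- w / \<tau>)) \<le> ln M" using pos le by simp
    moreover have "ln (x * exp (- w / \<tau>)) = ln x - w / \<tau>" using x by (simp add: ln_mult)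
    ultimately have "ln x - ln M \<le> w / \<tau>" by linarith
    then have "ln (x / M) \<le> w / \<tau>" using \<open>0 < M\<close> x by (simp add: ln_div)
    then show ?thesis using \<tau> by (simp add: mult.commute pos_le_divide_eq)
  qed
  have "rowsum t i / (2 * \<eta>) \<le> M" "colsum t j / (2 * \<eta>) \<le> M"
    using divide_right_mono[OF rowsum_le_norm1_mat[OF t, of i], of "2 * \<eta>"]
      divide_right_mono[OF colsum_le_norm1_mat[OF t, of j], of "2 * \<eta>"] \<eta> mass
    by simp_all
  then show "\<tau> * ln (a i / M) \<le> u i" and "\<tau> * ln (b j / M) \<le> v j"
    using dual_optimal_row_stationary[OF opt \<tau> \<eta>, of i] dual_optimal_col_stationary[OF opt \<tau> \<eta>, of j]
    by (simp_all add: ln_le a b)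
  have "t i j / (2 * \<eta>) \<le> M"
    using divide_right_mono[OF entry_le_rowsum[OF t, of i j], of "2 * \<eta>"] \<eta>
      \<open>rowsum t i / (2 * \<eta>) \<le> M\<close> by simp
  then show "t i j \<le> 2 * \<eta> * M" using \<eta> by (simp add: pos_divide_le_eq mult.commute)
qed

lemma abs_dual_potential_le:
  fixes u v t Cij Cm a b amin bmin M \<tau> \<eta> :: real
  assumes u: "\<tau> * ln (a / M) \<le> u" and v: "\<tau> * ln (b / M) \<le> v"
    and t: "u + v - Cij \<le> t" "t \<le> 2 * \<eta> * M" and "Cij \<le> Cm" "0 \<le> Cm"
    and "0 < amin" "amin \<le> a" "0 < bmin" "bmin \<le> b" "0 \<le> \<eta>" "0 < \<tau>" "0 < M"
  shows "\<bar>u\<bar> \<le> Cm + 2 * \<eta> * M + \<tau> * ln M - \<tau> * min (ln amin) (ln bmin)"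
proof -
  have "\<tau> * min (ln amin) (ln bmin) - \<tau> * ln M \<le> \<tau> * ln (a / M)"
    and "\<tau> * min (ln amin) (ln bmin) - \<tau> * ln M \<le> \<tau> * ln (b / M)"
    using assms by (auto simp: ln_div right_diff_distrib min_le_iff_disj intro!: mult_left_mono)
  moreover have "0 \<le> \<eta> * M" using assms by simp
  ultimately show ?thesis using assms by linarith
qed

lemma dual_optimal_abs_le:
  assumes opt: "dual_optimal C a b \<tau> \<eta> u v t" and C: "\<And>i j. C i j \<ge> 0"
    and a: "\<And>i. a i > 0" and b: "\<And>j. b j > 0" and \<tau>: "\<tau> > 0" and \<eta>: "\<eta> > 0"
    and amin: "0 < amin" "\<And>i. amin \<le> a i" and bmin: "0 < bmin" "\<And>j. bmin \<le> b j"
  defines "M \<equiv> ((\<Sum>i\<in>UNIV. a i) + (\<Sum>j\<in>UNIV. b j)) / 2"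
  shows "\<bar>u i\<bar> \<le> maxnorm_mat C + 2 * \<eta> * M + \<tau> * ln M - \<tau> * min (ln amin) (ln bmin)"
    and "\<bar>v j\<bar> \<le> maxnorm_mat C + 2 * \<eta> * M + \<tau> * ln M - \<tau> * min (ln amin) (ln bmin)"
proof -
  note bounds = dual_optimal_bounds[OF opt C a b \<tau> \<eta>, folded M_def]
  have "0 < M" using a b by (simp add: M_def sum_pos add_pos_pos)
  have slack: "u k + v l - C k l \<le> t k l" for k l
    using dual_optimal_slack[OF opt \<eta>] by (metis max.cobounded2)
  show "\<bar>u i\<bar> \<le> maxnorm_mat C + 2 * \<eta> * M + \<tau> * ln M - \<tau> * min (ln amin) (ln bmin)"
    by (rule abs_dual_potential_le[OF bounds(1)[of i] bounds(2)[of i] slack[of i i] bounds(3)[of i i]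
          le_maxnorm_mat[of C i i] maxnorm_mat_nonneg amin(1) amin(2)[of i] bmin(1) bmin(2)[of i]
          less_imp_le[OF \<eta>] \<tau> \<open>0 < M\<close>])
  show "\<bar>v j\<bar> \<le> maxnorm_mat C + 2 * \<eta> * M + \<tau> * ln M - \<tau> * min (ln amin) (ln bmin)"
    unfolding min.commute[of "ln amin"]
    by (rule abs_dual_potential_le[OF bounds(2)[of j] bounds(1)[of j] _ bounds(3)[of j j]
          le_maxnorm_mat[of C j j] maxnorm_mat_nonneg bmin(1) bmin(2)[of j] amin(1) amin(2)[of j]
          less_imp_le[OF \<eta>] \<tau> \<open>0 < M\<close>])
      (use slack[of j j] in simp)
qed

lemma min_mul_exp_le:
  fixes amin bmin M \<tau> K :: real
  assumes "0 < amin" "0 < bmin" "0 < M" "0 < \<tau>"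
  shows "min amin bmin * exp (- (K + \<tau> * ln M - \<tau> * min (ln amin) (ln bmin)) / \<tau>)
    \<le> amin * bmin / M * exp (- K / \<tau>)"
proof -
  define \<mu> where "\<mu> = min amin bmin"
  have "0 < \<mu>" using assms by (simp add: \<mu>_def)
  have "min (ln amin) (ln bmin) = ln \<mu>"
    using assms by (simp add: \<mu>_def min_def)
  moreover have "- (K + \<tau> * ln M - \<tau> * ln \<mu>) / \<tau> = - K / \<tau> + ln \<mu> - ln M"
    using assms by (simp add: field_simps)
  ultimately have "exp (- (K + \<tau> * ln M - \<tau> * min (ln amin) (ln bmin)) / \<tau>)
      = exp (- K / \<tau> + ln \<mu> - ln M)"
    by simp
  also have "\<dots> = exp (- K / \<tau>) * \<mu> / M"
    using assms \<open>0 < \<mu>\<close> by (simp add: exp_add exp_diff exp_minus divide_inverse)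
  finally have "min amin bmin * exp (- (K + \<tau> * ln M - \<tau> * min (ln amin) (ln bmin)) / \<tau>)
      = (\<mu> * \<mu>) * (exp (- K / \<tau>) / M)"
    by (simp add: \<mu>_def)
  also have "\<dots> \<le> (amin * bmin) * (exp (- K / \<tau>) / M)"
    using assms by (intro mult_right_mono) (auto simp: \<mu>_def min_def intro: mult_mono)
  finally show ?thesis by simp
qed

theorem mainTheorem7:
  fixes C :: "'n::finite \<Rightarrow> 'n \<Rightarrow> real"
    and a b :: "'n \<Rightarrow> real"
    and \<tau> \<eta> :: real
    and X\<eta> Xf :: "'n \<Rightarrow> 'n \<Rightarrow> real"
    and us vs :: "'n \<Rightarrow> real" and ts :: "'n \<Rightarrow> 'n \<Rightarrow> real"
  assumes C_nonneg: "\<forall>i j. C i j \<ge> 0"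
    and a_pos: "\<forall>i. a i > 0" and b_pos: "\<forall>i. b i > 0"
    and tau_pos: "\<tau> > 0" and eta_pos: "\<eta> > 0"
    and Xeta_min: "nonneg_mat X\<eta> \<and> (\<forall>Y. nonneg_mat Y \<longrightarrow> uot_g C a b \<tau> \<eta> X\<eta> \<le> uot_g C a b \<tau> \<eta> Y)"
    and Xf_min: "nonneg_mat Xf \<and> (\<forall>Y. nonneg_mat Y \<longrightarrow> uot_f C a b \<tau> Xf \<le> uot_f C a b \<tau> Y)"
    and dual_opt: "dual_feasible C us vs ts \<and>
       (\<forall>u v t. dual_feasible C u v t \<longrightarrow> dual_obj a b \<tau> \<eta> u v t \<le> dual_obj a b \<tau> \<eta> us vs ts)"
  defines "\<alpha> \<equiv> (\<Sum>i\<in>UNIV. a i)" and "\<beta> \<equiv> (\<Sum>i\<in>UNIV. b i)"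
    and "amin \<equiv> Min (range a)" and "bmin \<equiv> Min (range b)"
  defines "D \<equiv> maxnorm_mat C + \<eta> * (\<alpha> + \<beta>) + \<tau> * ln ((\<alpha> + \<beta>) / 2)
                 - \<tau> * min (ln amin) (ln bmin)"
  shows "norm1_mat X\<eta> \<le> (\<alpha> + \<beta>) / 2 \<and> norm1_mat Xf \<le> (\<alpha> + \<beta>) / 2 \<and>
     (\<forall>i. us i \<ge> \<tau> * ln (2 * a i / (\<alpha> + \<beta>))) \<and>
     (\<forall>j. vs j \<ge> \<tau> * ln (2 * b j / (\<alpha> + \<beta>))) \<and>
     maxnorm_vec us \<le> D \<and> maxnorm_vec vs \<le> D \<and>
     (\<forall>i j. min (rowsum X\<eta> i) (colsum X\<eta> j) \<ge> min amin bmin * exp (- D / \<tau>))"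
proof -
  define M where "M = (\<alpha> + \<beta>) / 2"
  have a: "\<And>i. 0 < a i" and b: "\<And>j. 0 < b j" and C: "\<And>i j. 0 \<le> C i j"
    using a_pos b_pos C_nonneg by auto
  have X\<eta>: "uot_g_minimizer C a b \<tau> \<eta> X\<eta>" and Xf: "uot_g_minimizer C a b \<tau> 0 Xf"
    and opt: "dual_optimal C a b \<tau> \<eta> us vs ts"
    using Xeta_min Xf_min dual_opt by (simp_all add: uot_g_minimizer_def uot_g_def dual_optimal_def)
  have amin: "0 < amin" "\<And>i. amin \<le> a i" and bmin: "0 < bmin" "\<And>j. bmin \<le> b j"
    using a b by (simp_all add: amin_def bmin_def)
  have "0 < M" using a b by (simp add: M_def \<alpha>_def \<beta>_def sum_pos add_pos_pos)
  have D_eq: "D = maxnorm_mat C + 2 * \<eta> * M + \<tau> * ln M - \<tau> * min (ln amin) (ln bmin)"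
    by (simp add: D_def M_def)
  have mass: "norm1_mat X\<eta> \<le> M" "norm1_mat Xf \<le> M"
    using uot_g_minimizer_norm1_le[OF X\<eta> C a b tau_pos] uot_g_minimizer_norm1_le[OF Xf C a b tau_pos]
      eta_pos by (simp_all add: M_def \<alpha>_def \<beta>_def)
  note dual = dual_optimal_bounds[OF opt C a b tau_pos eta_pos, folded \<alpha>_def \<beta>_def M_def]
    dual_optimal_abs_le[OF opt C a b tau_pos eta_pos amin bmin, folded \<alpha>_def \<beta>_def M_def,
      folded D_eq]
  have "min amin bmin * exp (- D / \<tau>)
      \<le> amin * bmin / M * exp (- (maxnorm_mat C + 2 * \<eta> * M) / \<tau>)"
    unfolding D_eq by (rule min_mul_exp_le[OF amin(1) bmin(1) \<open>0 < M\<close> tau_pos])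
  note marginals = uot_g_minimizer_marginals_ge[OF X\<eta> a b tau_pos less_imp_le[OF eta_pos]
      le_maxnorm_mat[of C] amin(2) bmin(2) amin(1) bmin(1) mass(1), THEN order_trans[OF this]]
  have ratio: "2 * x / (\<alpha> + \<beta>) = x / M" for x by (simp add: M_def)
  show ?thesis
    unfolding ratio M_def[symmetric] using mass dual marginals by (simp add: maxnorm_vec_le)
qed

end
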